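(* Let $A$ be an infinite countable set, let $\{a_n\}_{n\in A}$ be a family of non-negative numbers such that for some $c>0$ the set $\{n\in A:a_n\leq c\}$ is infinite, and let $\{b_n\}_{n\in\mathbb{Z}_+}$ be a sequence of numbers in $[c,\infty)$ with $b_n\to\infty$ as $n\to\infty$. Then there exists a bijection $\pi:\mathbb{Z}_+\to A$ such that $a_{\pi(n)}\leq b_n$ for each $n\in\mathbb{Z}_+$.
   Context: $\mathbb{Z}_+$ is the set of non-negative integers. *)

theory Defs
  imports "HOL-Analysis.Analysis"
begin

end

theory Submission
  imports Defs
begin

text \<open>Split off from the small elements \<open>{n \<in> A. a n \<le> c}\<close> an infinite set \<open>V\<close> whose
  complement in the small elements is still infinite; the rest \<open>U = A - V\<close> is then countably
  infinite. Enumerate \<open>U\<close> as \<open>u 0, u 1, \<dots>\<close> and, since \<open>b \<rightarrow> \<infinity>\<close>, place \<open>u j\<close> at an even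
  position \<open>p j\<close> with \<open>a (u j) \<le> b (p j)\<close>, \<open>p\<close> strictly increasing. The infinitely many
  remaining positions are filled bijectively with \<open>V\<close>, where \<open>a \<le> c \<le> b\<close> holds trivially.\<close>

lemma infinite_even_nat: "infinite {n::nat. even n}"
  and infinite_odd_nat: "infinite {n::nat. odd n}"
proof -
  have "\<exists>n\<ge>m. even n" "\<exists>n\<ge>m. odd n" for m :: nat
    by (rule exI[of _ "2 * m"], simp) (rule exI[of _ "Suc (2 * m)"], simp)
  then show "infinite {n::nat. even n}" "infinite {n::nat. odd n}"
    by (simp_all add: infinite_nat_iff_unbounded_le)
qed

lemma infinite_split_infinite:
  assumes "infinite S"
  shows "\<exists>T\<subseteq>S. infinite T \<and> infinite (S - T)"
proof -
  obtain f :: "nat \<Rightarrow> 'a" where f: "inj f" "range f \<subseteq> S"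
    using infinite_countable_subset[OF assms] by blast
  have "f ` {n. odd n} \<subseteq> S - f ` {n. even n}"
    using f by (auto simp: inj_eq)
  moreover have "infinite (f ` {n. odd n})" "infinite (f ` {n. even n})"
    using infinite_even_nat infinite_odd_nat finite_imageD inj_on_subset[OF f(1)] by blast+
  ultimately show ?thesis
    using f(2) finite_subset by (intro exI[of _ "f ` {n. even n}"]) blast
qed

lemma filterlim_at_top_dominating_subseq:
  fixes b h :: "nat \<Rightarrow> real"
  assumes "filterlim b at_top sequentially"
  shows "\<exists>q. strict_mono q \<and> (\<forall>j. h j \<le> b (q j))"
proof -
  have large: "\<exists>m>k. K \<le> b m" for k K
  proof -
    obtain N where "\<forall>m\<ge>N. K \<le> b m"
      using assms by (auto simp: filterlim_at_top eventually_sequentially)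
    then show ?thesis by (intro exI[of _ "max (Suc k) N"]) auto
  qed
  have "\<exists>q. \<forall>j. h j \<le> b (q j) \<and> q j < q (Suc j)"
    by (rule dependent_nat_choice) (use large in blast)+
  then show ?thesis by (auto simp: strict_mono_Suc_iff)
qed

lemma filterlim_at_top_sparse_dominating_subseq:
  fixes b h :: "nat \<Rightarrow> real"
  assumes "filterlim b at_top sequentially"
  shows "\<exists>p. inj p \<and> infinite (- range p) \<and> (\<forall>j. h j \<le> b (p j))"
proof -
  have "strict_mono ((*) (2::nat))"
    by (simp add: strict_mono_def)
  then have "filterlim (b \<circ> (*) 2) at_top sequentially"
    using filterlim_compose[OF assms filterlim_subseq] by (simp add: comp_def)
  then obtain q where q: "strict_mono q" "\<And>j. h j \<le> b (2 * q j)"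
    using filterlim_at_top_dominating_subseq[of "b \<circ> (*) 2" h] by auto
  have "inj (\<lambda>j. 2 * q j)"
    using strict_mono_imp_inj_on[OF q(1), of UNIV] unfolding inj_def by simp
  moreover have "{n. odd n} \<subseteq> - range (\<lambda>j. 2 * q j)"
    by auto
  ultimately show ?thesis
    using q(2) infinite_odd_nat finite_subset by blast
qed

lemma bij_betw_countably_infinite:
  assumes "countable X" "infinite X" "countable Y" "infinite Y"
  shows "\<exists>g. bij_betw g X Y"
  using bij_betw_trans[OF to_nat_on_infinite[OF assms(1,2)] bij_betw_from_nat_into[OF assms(3,4)]]
  by blast

lemma bij_betw_merge_on_range:
  assumes "inj p" "bij_betw u UNIV U" "bij_betw g (- range p) V" "U \<inter> V = {}"
  shows "bij_betw (\<lambda>n. if n \<in> range p then u (inv p n) else g n) UNIV (U \<union> V)"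
proof -
  let ?\<pi> = "\<lambda>n. if n \<in> range p then u (inv p n) else g n"
  have "bij_betw (u \<circ> inv p) (range p) U"
    using bij_betw_trans[OF bij_betw_inv_into[OF inj_on_imp_bij_betw[OF assms(1)]] assms(2)] .
  then have "bij_betw ?\<pi> (range p) U"
    by (rule bij_betw_cong[THEN iffD1, rotated]) auto
  moreover have "bij_betw ?\<pi> (- range p) V"
    using assms(3) by (rule bij_betw_cong[THEN iffD1, rotated]) auto
  ultimately have "bij_betw ?\<pi> (range p \<union> - range p) (U \<union> V)"
    using assms(4) by (rule bij_betw_combine)
  then show ?thesis by simp
qed

theorem lemma2p2:
  fixes A :: "'a set" and a :: "'a \<Rightarrow> real" and b :: "nat \<Rightarrow> real" and c :: real
  assumes "countable A" and "infinite A"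
    and "\<And>n. n \<in> A \<Longrightarrow> a n \<ge> 0"
    and "c > 0"
    and "infinite {n \<in> A. a n \<le> c}"
    and "\<And>n. b n \<ge> c"
    and "filterlim b at_top sequentially"
  shows "\<exists>\<pi>. bij_betw \<pi> (UNIV :: nat set) A \<and> (\<forall>n. a (\<pi> n) \<le> b n)"
proof -
  obtain V where V: "V \<subseteq> {n \<in> A. a n \<le> c}" "infinite V" "infinite ({n \<in> A. a n \<le> c} - V)"
    using infinite_split_infinite[OF assms(5)] by blast
  define U where "U = A - V"
  have U: "countable U" "infinite U"
    using assms(1) V(3) finite_subset[of "{n \<in> A. a n \<le> c} - V" "A - V"]
    unfolding U_def by auto
  define u where "u = from_nat_into U"
  have u: "bij_betw u UNIV U"
    unfolding u_def using bij_betw_from_nat_into[OF U] .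
  obtain p where p: "inj p" "infinite (- range p)" "\<And>j. a (u j) \<le> b (p j)"
    using filterlim_at_top_sparse_dominating_subseq[OF assms(7), of "a \<circ> u"] by auto
  have "countable V"
    using assms(1) V(1) countable_subset[of V A] by blast
  then obtain g where g: "bij_betw g (- range p) V"
    using bij_betw_countably_infinite[of "- range p" V] p(2) V(2) by blast
  define \<pi> where "\<pi> n = (if n \<in> range p then u (inv p n) else g n)" for n
  have "U \<inter> V = {}" "U \<union> V = A"
    using V(1) unfolding U_def by auto
  then have "bij_betw \<pi> UNIV A"
    using bij_betw_merge_on_range[OF p(1) u g] unfolding \<pi>_def[abs_def] by simp
  moreover have "a (\<pi> n) \<le> b n" for n
  proof (cases "n \<in> range p")
    case True
    then obtain j where "n = p j" by blast
    moreover have "inv p (p j) = j" using p(1) by simp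
    ultimately show ?thesis using p(3)[of j] by (simp add: \<pi>_def)
  next
    case False
    then have "\<pi> n \<in> V" using g by (simp add: \<pi>_def bij_betw_apply)
    then show ?thesis using V(1) assms(6)[of n] by auto
  qed
  ultimately show ?thesis by blast
qed

end
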